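(* Let $r$ be a positive integer or $\infty$. Suppose $(A,B)$ is a partition of the vertex set of a graph $G$ such that the relation $\equiv_{(A,B)}$ has $k$ equivalence classes. If $G[A]$ and $G[B]$ each have a weak $r$-guidance system of maximum outdegree at most $c$, then $G$ has a weak $r$-guidance system of maximum outdegree at most $c+k$.
   Context: All graphs are finite, simple and undirected. For a partition $(A,B)$ of $V(G)$, $u\equiv_{(A,B)}v$ means that either $u,v\in A$ and $u,v$ have the same neighbors in $B$, or $u,v\in B$ and $u,v$ have the same neighbors in $A$. A partial orientation of $G$ is a directed graph $\vec{H}$ on $V(G)$ with every $(u,v)\in E(\vec{H})$ satisfying $uv\in E(G)$. $B_{\vec{H}}(v,a)$ is the set of vertices reachable from $v$ by a directed path of length at most $a$. For a positive integer $r$, a weak $r$-guidance system is a partial orientation $\vec{H}$ such that for any distinct $u,v$ at distance $\ell\le r$ in $G$ there exist non-negative integers $a,b$ with $a+b=\ell-1$ such that $G$ has an edge between $B_{\vec{H}}(u,a)$ and $B_{\vec{H}}(v,b)$; a weak $\infty$-guidance system is a partial orientation that is a weak $r$-guidance system for every positive integer $r$. *)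

theory Defs
  imports Main "HOL-Library.Extended_Nat"
begin

definition graph :: "'a set \<Rightarrow> ('a \<times> 'a) set \<Rightarrow> bool" where
  "graph V E \<longleftrightarrow> finite V \<and> E \<subseteq> V \<times> V \<and> sym E \<and> irrefl E"

definition induced :: "('a \<times> 'a) set \<Rightarrow> 'a set \<Rightarrow> ('a \<times> 'a) set" where
  "induced E A = E \<inter> (A \<times> A)"

definition gdist :: "('a \<times> 'a) set \<Rightarrow> 'a \<Rightarrow> 'a \<Rightarrow> nat \<Rightarrow> bool" where
  "gdist E u v l \<longleftrightarrow> (u, v) \<in> E ^^ l \<and> (\<forall>m<l. (u, v) \<notin> E ^^ m)"

definition partial_orientation :: "'a set \<Rightarrow> ('a \<times> 'a) set \<Rightarrow> ('a \<times> 'a) set \<Rightarrow> bool" where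
  "partial_orientation V E H \<longleftrightarrow> H \<subseteq> E"

definition out_ball :: "('a \<times> 'a) set \<Rightarrow> 'a \<Rightarrow> nat \<Rightarrow> 'a set" where
  "out_ball H v a = {w. \<exists>i\<le>a. (v, w) \<in> H ^^ i}"

definition weak_guidance :: "'a set \<Rightarrow> ('a \<times> 'a) set \<Rightarrow> nat \<Rightarrow> ('a \<times> 'a) set \<Rightarrow> bool" where
  "weak_guidance V E r H \<longleftrightarrow> partial_orientation V E H \<and>
     (\<forall>u\<in>V. \<forall>v\<in>V. \<forall>l. u \<noteq> v \<and> gdist E u v l \<and> l \<le> r \<longrightarrow>
        (\<exists>a b. a + b = l - 1 \<and>
           (\<exists>x\<in>out_ball H u a. \<exists>y\<in>out_ball H v b. (x, y) \<in> E)))"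

definition weak_guidance_enat :: "'a set \<Rightarrow> ('a \<times> 'a) set \<Rightarrow> enat \<Rightarrow> ('a \<times> 'a) set \<Rightarrow> bool" where
  "weak_guidance_enat V E r H = (case r of enat n \<Rightarrow> weak_guidance V E n H
                                  | \<infinity> \<Rightarrow> (\<forall>n\<ge>1. weak_guidance V E n H))"

definition max_outdeg_le :: "'a set \<Rightarrow> ('a \<times> 'a) set \<Rightarrow> nat \<Rightarrow> bool" where
  "max_outdeg_le V H c \<longleftrightarrow> (\<forall>v\<in>V. card {w. (v, w) \<in> H} \<le> c)"

definition equiv_AB :: "('a \<times> 'a) set \<Rightarrow> 'a set \<Rightarrow> 'a set \<Rightarrow> 'a \<Rightarrow> 'a \<Rightarrow> bool" where
  "equiv_AB E A B u v \<longleftrightarrow>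
     (u \<in> A \<and> v \<in> A \<and> {w\<in>B. (u, w) \<in> E} = {w\<in>B. (v, w) \<in> E}) \<or>
     (u \<in> B \<and> v \<in> B \<and> {w\<in>A. (u, w) \<in> E} = {w\<in>A. (v, w) \<in> E})"

end

theory Submission
  imports Defs
begin

text \<open>Keep the guidance systems of \<open>G[A]\<close> and \<open>G[B]\<close>, and add, for every class \<open>X\<close> of
  \<open>equiv_AB E A B\<close> and every vertex \<open>w\<close> that can reach \<open>X\<close>, one arc from \<open>w\<close> to a neighbour on a
  shortest path towards \<open>X\<close>; this costs at most \<open>k\<close> arcs per vertex. Following these arcs, a
  vertex at distance \<open>m\<close> from a vertex \<open>x\<close> reaches some twin of \<open>x\<close> within \<open>m\<close> steps. Now take
  a shortest \<open>u\<close>--\<open>v\<close> path. If it stays on one side, it is also a shortest path of that side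
  and the old guidance system applies. Otherwise it contains an edge \<open>xy\<close> between \<open>A\<close> and \<open>B\<close>;
  the new arcs lead from \<open>u\<close> to a twin \<open>x'\<close> of \<open>x\<close> and from \<open>v\<close> to a twin \<open>y'\<close> of \<open>y\<close> within
  the right number of steps, and \<open>x'y'\<close> is an edge because twins have the same neighbours
  across the partition.\<close>

lemma relpow_mono: "(R :: ('a \<times> 'a) set) \<subseteq> S \<Longrightarrow> R ^^ n \<subseteq> S ^^ n"
  by (induction n) (simp_all add: relcomp_mono)

lemma relpow_sym: "sym E \<Longrightarrow> (x, y) \<in> E ^^ n \<Longrightarrow> (y, x) \<in> E ^^ n"
proof (induction n arbitrary: x y)
  case 0
  then show ?case by simp
next
  case (Suc n)
  then obtain z where "(x, z) \<in> E ^^ n" "(z, y) \<in> E" by auto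
  with Suc have "(y, z) \<in> E" "(z, x) \<in> E ^^ n" by (auto dest: symD)
  then show ?case by (rule relpow_Suc_I2)
qed

lemma out_ball_0 [simp]: "out_ball H v 0 = {v}"
  by (auto simp: out_ball_def)

lemma center_in_out_ball: "v \<in> out_ball H v a"
  by (auto simp: out_ball_def intro: relpow_0_I)

lemma out_ball_mono:
  assumes "H \<subseteq> H'" "a \<le> b"
  shows "out_ball H v a \<subseteq> out_ball H' v b"
proof
  fix w assume "w \<in> out_ball H v a"
  then obtain i where "i \<le> a" "(v, w) \<in> H ^^ i" by (auto simp: out_ball_def)
  moreover have "H ^^ i \<subseteq> H' ^^ i" using assms(1) by (rule relpow_mono)
  ultimately show "w \<in> out_ball H' v b"
    using assms(2) by (auto simp: out_ball_def intro!: exI[of _ i])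
qed

lemma out_ball_step: "(v, w) \<in> H \<Longrightarrow> out_ball H w a \<subseteq> out_ball H v (Suc a)"
  unfolding out_ball_def by (fastforce intro: relpow_Suc_I2)

definition dist_to_set :: "('a \<times> 'a) set \<Rightarrow> 'a set \<Rightarrow> 'a \<Rightarrow> nat" where
  "dist_to_set E X w = (LEAST m. \<exists>x\<in>X. (w, x) \<in> E ^^ m)"

text \<open>The choice is arbitrary unless \<open>w \<notin> X\<close> can reach \<open>X\<close>.\<close>

definition step_towards :: "('a \<times> 'a) set \<Rightarrow> 'a set \<Rightarrow> 'a \<Rightarrow> 'a" where
  "step_towards E X w =
     (SOME w'. (w, w') \<in> E \<and> (\<exists>x\<in>X. (w', x) \<in> E ^^ (dist_to_set E X w - 1)))"

lemma step_towards:
  assumes "w \<notin> X" "x \<in> X" "(w, x) \<in> E ^^ Suc m"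
  shows "(w, step_towards E X w) \<in> E" and "out_ball E (step_towards E X w) m \<inter> X \<noteq> {}"
proof -
  let ?d = "dist_to_set E X w"
  have reach_d: "\<exists>x\<in>X. (w, x) \<in> E ^^ ?d"
    unfolding dist_to_set_def by (rule LeastI[of _ "Suc m"]) (use assms in blast)
  have "?d \<le> Suc m"
    unfolding dist_to_set_def by (rule Least_le) (use assms in blast)
  moreover have "?d \<noteq> 0"
  proof
    assume "?d = 0"
    with reach_d have "w \<in> X" by auto
    with assms(1) show False ..
  qed
  ultimately obtain d where d: "?d = Suc d" "d \<le> m"
    using not0_implies_Suc by fastforce
  with reach_d obtain x' where "x' \<in> X" "(w, x') \<in> E ^^ Suc d"
    by auto
  then obtain w' where "(w, w') \<in> E" "(w', x') \<in> E ^^ d"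
    by (metis relpow_Suc_D2)
  with \<open>x' \<in> X\<close> d(1) have "\<exists>w'. (w, w') \<in> E \<and> (\<exists>x\<in>X. (w', x) \<in> E ^^ (?d - 1))"
    by auto
  then have "(w, step_towards E X w) \<in> E \<and> (\<exists>x\<in>X. (step_towards E X w, x) \<in> E ^^ (?d - 1))"
    unfolding step_towards_def by (rule someI_ex)
  then have s: "(w, step_towards E X w) \<in> E \<and> (\<exists>x\<in>X. (step_towards E X w, x) \<in> E ^^ d)"
    using d(1) by simp
  then show "(w, step_towards E X w) \<in> E" by blast
  show "out_ball E (step_towards E X w) m \<inter> X \<noteq> {}"
    using s d(2) unfolding out_ball_def by blast
qed

definition towards_arcs :: "('a \<times> 'a) set \<Rightarrow> 'a set set \<Rightarrow> ('a \<times> 'a) set" where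
  "towards_arcs E \<X> = {(w, step_towards E X w) | w X.
     X \<in> \<X> \<and> w \<notin> X \<and> (\<exists>x\<in>X. \<exists>m. (w, x) \<in> E ^^ m)}"

lemma towards_arcs_subset: "towards_arcs E \<X> \<subseteq> E"
proof
  fix p assume "p \<in> towards_arcs E \<X>"
  then obtain w X x m where p: "p = (w, step_towards E X w)" "w \<notin> X" "x \<in> X" "(w, x) \<in> E ^^ m"
    unfolding towards_arcs_def by blast
  have "m \<noteq> 0"
  proof
    assume "m = 0"
    with p(2-4) show False by simp
  qed
  then obtain m' where "m = Suc m'" by (cases m) auto
  with p(4) have "(w, x) \<in> E ^^ Suc m'" by simp
  with p show "p \<in> E" using step_towards(1) by simp
qed

lemma towards_arcsI:
  "X \<in> \<X> \<Longrightarrow> w \<notin> X \<Longrightarrow> x \<in> X \<Longrightarrow> (w, x) \<in> E ^^ m \<Longrightarrow>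
    (w, step_towards E X w) \<in> towards_arcs E \<X>"
  unfolding towards_arcs_def by blast

lemma towards_arcs_reach:
  assumes "X \<in> \<X>" "towards_arcs E \<X> \<subseteq> H" "out_ball E w m \<inter> X \<noteq> {}"
  shows "out_ball H w m \<inter> X \<noteq> {}"
  using assms(3)
proof (induction m arbitrary: w)
  case 0
  then show ?case by simp
next
  case (Suc m)
  show ?case
  proof (cases "w \<in> X")
    case True
    then show ?thesis using center_in_out_ball[of w H "Suc m"] by blast
  next
    case False
    from Suc.prems obtain x j where x: "x \<in> X" "j \<le> Suc m" "(w, x) \<in> E ^^ j"
      unfolding out_ball_def by blast
    have "j \<noteq> 0"
    proof
      assume "j = 0"
      with x(1,3) False show False by simp
    qed
    then obtain j' where j': "j = Suc j'" by (cases j) auto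
    let ?s = "step_towards E X w"
    from x(3) j' have "(w, x) \<in> E ^^ Suc j'" by simp
    note s = step_towards[OF False x(1) this]
    have "out_ball E ?s j' \<subseteq> out_ball E ?s m"
      using x(2) j' by (intro out_ball_mono) auto
    with s(2) have "out_ball E ?s m \<inter> X \<noteq> {}" by blast
    then have "out_ball H ?s m \<inter> X \<noteq> {}" by (rule Suc.IH)
    moreover have "(w, ?s) \<in> H"
      using assms(2) towards_arcsI[OF assms(1) False x(1,3)] by (rule subsetD)
    ultimately show ?thesis using out_ball_step[of w ?s H m] by blast
  qed
qed

lemma out_ball_meets_twin:
  assumes "towards_arcs E (V // R) \<subseteq> H" "x \<in> V" "(x, x) \<in> R" "(w, x) \<in> E ^^ m"
  obtains x' where "(x, x') \<in> R" "x' \<in> out_ball H w m"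
proof -
  have "x \<in> out_ball E w m" using assms(4) by (auto simp: out_ball_def)
  moreover have "x \<in> R `` {x}" using assms(3) by blast
  ultimately have "out_ball E w m \<inter> R `` {x} \<noteq> {}" by blast
  with quotientI[OF assms(2)] assms(1) have "out_ball H w m \<inter> R `` {x} \<noteq> {}"
    by (rule towards_arcs_reach)
  then obtain x' where "x' \<in> R `` {x}" "x' \<in> out_ball H w m" by blast
  then show thesis using that by blast
qed

lemma relpow_induced_or_leaves:
  assumes "(u, v) \<in> E ^^ l" "u \<in> S"
  shows "v \<in> S \<and> (u, v) \<in> induced E S ^^ l \<or>
    (\<exists>i j x y. Suc (i + j) = l \<and> (u, x) \<in> E ^^ i \<and> (x, y) \<in> E \<and> (y, v) \<in> E ^^ j \<and>
       x \<in> S \<and> y \<notin> S)"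
  using assms(1)
proof (induction l arbitrary: v)
  case 0
  then show ?case using assms(2) by auto
next
  case (Suc l)
  then obtain w where w: "(u, w) \<in> E ^^ l" "(w, v) \<in> E" by auto
  from Suc.IH[OF w(1)] show ?case
  proof (elim disjE exE conjE)
    assume "w \<in> S" "(u, w) \<in> induced E S ^^ l"
    with w show ?thesis
      by (cases "v \<in> S") (force simp: induced_def intro: relpow_0_I)+
  next
    fix i j x y
    assume "Suc (i + j) = l" "(u, x) \<in> E ^^ i" "(x, y) \<in> E" "(y, w) \<in> E ^^ j" "x \<in> S" "y \<notin> S"
    with w(2) show ?thesis
      by (intro disjI2 exI[of _ i] exI[of _ "Suc j"] exI[of _ x] exI[of _ y]) auto
  qed
qed

lemma gdist_induced:
  assumes "gdist E u v l" "(u, v) \<in> induced E S ^^ l"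
  shows "gdist (induced E S) u v l"
proof -
  have "induced E S ^^ m \<subseteq> E ^^ m" for m
    by (rule relpow_mono) (auto simp: induced_def)
  then show ?thesis using assms unfolding gdist_def by blast
qed

lemma equiv_AB_swap: "equiv_AB E B A = equiv_AB E A B"
  by (auto simp: equiv_AB_def fun_eq_iff)

lemma equiv_AB_refl: "A \<inter> B = {} \<Longrightarrow> x \<in> A \<union> B \<Longrightarrow> equiv_AB E A B x x"
  by (auto simp: equiv_AB_def)

lemma equiv_AB_adjacent:
  assumes "sym E" "A \<inter> B = {}" "(x, y) \<in> E" "x \<in> A" "y \<in> B"
    and "equiv_AB E A B x x'" "equiv_AB E A B y y'"
  shows "(x', y') \<in> E"
proof -
  have "x \<notin> B" "y \<notin> A" using assms by auto
  then have x': "x' \<in> A" "{w\<in>B. (x, w) \<in> E} = {w\<in>B. (x', w) \<in> E}"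
    and y': "{w\<in>A. (y, w) \<in> E} = {w\<in>A. (y', w) \<in> E}"
    using assms(6,7) unfolding equiv_AB_def by auto
  have "(x', y) \<in> E" using x'(2) assms(3,5) by blast
  then have "(y', x') \<in> E" using y' x'(1) assms(1) by (blast dest: symD)
  then show ?thesis using assms(1) by (auto dest: symD)
qed

definition linked_balls :: "('a \<times> 'a) set \<Rightarrow> ('a \<times> 'a) set \<Rightarrow> 'a \<Rightarrow> 'a \<Rightarrow> nat \<Rightarrow> bool" where
  "linked_balls E H u v l \<longleftrightarrow>
     (\<exists>a b. a + b = l - 1 \<and> (\<exists>x\<in>out_ball H u a. \<exists>y\<in>out_ball H v b. (x, y) \<in> E))"

lemma weak_guidance_iff:
  "weak_guidance V E r H \<longleftrightarrow> H \<subseteq> E \<and>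
     (\<forall>u\<in>V. \<forall>v\<in>V. \<forall>l. u \<noteq> v \<and> gdist E u v l \<and> l \<le> r \<longrightarrow> linked_balls E H u v l)"
  by (simp add: weak_guidance_def partial_orientation_def linked_balls_def)

lemma linked_balls_mono:
  "linked_balls E H u v l \<Longrightarrow> E \<subseteq> E' \<Longrightarrow> H \<subseteq> H' \<Longrightarrow> linked_balls E' H' u v l"
  unfolding linked_balls_def using out_ball_mono[of H H'] by blast

lemma linked_balls_from_side:
  assumes "sym E" "E \<subseteq> V \<times> V" "S \<union> T = V" "S \<inter> T = {}"
    and "weak_guidance S (induced E S) n H\<^sub>S" "H\<^sub>S \<subseteq> H"
    and "towards_arcs E (V // {(x, y). equiv_AB E S T x y}) \<subseteq> H"
    and "u \<in> S" "u \<noteq> v" "gdist E u v l" "l \<le> n"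
  shows "linked_balls E H u v l"
proof -
  let ?R = "{(x, y). equiv_AB E S T x y}"
  have refl: "(z, z) \<in> ?R" if "z \<in> V" for z
    using equiv_AB_refl[OF assms(4)] assms(3) that by simp
  have "(u, v) \<in> E ^^ l" using assms(10) by (simp add: gdist_def)
  from relpow_induced_or_leaves[OF this assms(8)] show ?thesis
  proof (elim disjE exE conjE)
    assume "v \<in> S" "(u, v) \<in> induced E S ^^ l"
    from assms(10) this(2) have "gdist (induced E S) u v l" by (rule gdist_induced)
    with assms(5,8,9,11) \<open>v \<in> S\<close> have "linked_balls (induced E S) H\<^sub>S u v l"
      by (simp add: weak_guidance_iff)
    then show ?thesis
      by (rule linked_balls_mono[OF _ _ assms(6)]) (auto simp: induced_def)
  next
    fix i j x y
    assume path: "Suc (i + j) = l" "(u, x) \<in> E ^^ i" "(x, y) \<in> E" "(y, v) \<in> E ^^ j"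
      and side: "x \<in> S" "y \<notin> S"
    have xy: "x \<in> V" "y \<in> V" "y \<in> T" using path(3) assms(2,3) side(2) by auto
    obtain x' where x': "(x, x') \<in> ?R" "x' \<in> out_ball H u i"
      using out_ball_meets_twin[OF assms(7) xy(1) refl[OF xy(1)] path(2)] .
    obtain y' where y': "(y, y') \<in> ?R" "y' \<in> out_ball H v j"
      using out_ball_meets_twin[OF assms(7) xy(2) refl[OF xy(2)] relpow_sym[OF assms(1) path(4)]] .
    have "(x', y') \<in> E"
      using equiv_AB_adjacent[OF assms(1,4) path(3) side(1) xy(3)] x'(1) y'(1) by blast
    then show ?thesis
      unfolding linked_balls_def using x'(2) y'(2) path(1) by force
  qed
qed

lemma weak_guidance_Un_towards_arcs:
  assumes "graph V E" "A \<union> B = V" "A \<inter> B = {}"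
    and "weak_guidance A (induced E A) n H\<^sub>A" "weak_guidance B (induced E B) n H\<^sub>B"
  shows "weak_guidance V E n
           (H\<^sub>A \<union> H\<^sub>B \<union> towards_arcs E (V // {(u, v). equiv_AB E A B u v}))"
    (is "weak_guidance V E n ?H")
proof -
  have E: "sym E" "E \<subseteq> V \<times> V" using assms(1) by (auto simp: graph_def)
  have "H\<^sub>A \<subseteq> E" "H\<^sub>B \<subseteq> E"
    using assms(4,5) by (auto simp: weak_guidance_iff induced_def)
  then have "?H \<subseteq> E" using towards_arcs_subset by blast
  moreover have "linked_balls E ?H u v l"
    if "u \<in> V" "u \<noteq> v" "gdist E u v l" "l \<le> n" for u v l
  proof (cases "u \<in> A")
    case True
    show ?thesis
      by (rule linked_balls_from_side[OF E assms(2,3,4) _ _ True that(2-4)]) auto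
  next
    case False
    with that(1) assms(2) have "u \<in> B" by blast
    show ?thesis
      by (rule linked_balls_from_side[OF E _ _ assms(5) _ _ \<open>u \<in> B\<close> that(2-4)])
        (use assms(2,3) in \<open>auto simp: equiv_AB_swap\<close>)
  qed
  ultimately show ?thesis by (simp add: weak_guidance_iff)
qed

lemma max_outdeg_le_towards_arcs:
  assumes "finite \<X>"
  shows "max_outdeg_le V (towards_arcs E \<X>) (card \<X>)"
  unfolding max_outdeg_le_def
proof
  fix w
  have "{w'. (w, w') \<in> towards_arcs E \<X>} \<subseteq> (\<lambda>X. step_towards E X w) ` \<X>"
    unfolding towards_arcs_def by blast
  then have "card {w'. (w, w') \<in> towards_arcs E \<X>} \<le> card ((\<lambda>X. step_towards E X w) ` \<X>)"
    using assms by (intro card_mono) auto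
  also have "\<dots> \<le> card \<X>" using assms by (rule card_image_le)
  finally show "card {w'. (w, w') \<in> towards_arcs E \<X>} \<le> card \<X>" .
qed

lemma card_out_neighbours_le:
  assumes "Domain H \<subseteq> A" "max_outdeg_le A H c"
  shows "card {w'. (w, w') \<in> H} \<le> c"
proof (cases "w \<in> A")
  case True
  then show ?thesis using assms(2) by (simp add: max_outdeg_le_def)
next
  case False
  then have "{w'. (w, w') \<in> H} = {}" using assms(1) by blast
  then show ?thesis by simp
qed

lemma max_outdeg_le_Un:
  assumes "Domain H\<^sub>A \<subseteq> A" "Domain H\<^sub>B \<subseteq> B" "A \<inter> B = {}"
    and "max_outdeg_le A H\<^sub>A c" "max_outdeg_le B H\<^sub>B c" "max_outdeg_le V R d"
  shows "max_outdeg_le V (H\<^sub>A \<union> H\<^sub>B \<union> R) (c + d)"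
  unfolding max_outdeg_le_def
proof
  fix w assume "w \<in> V"
  let ?N = "\<lambda>H. {w'. (w, w') \<in> H}"
  have "?N H\<^sub>A = {} \<or> ?N H\<^sub>B = {}"
    using assms(1-3) by blast
  then have c: "card (?N H\<^sub>A) + card (?N H\<^sub>B) \<le> c"
    using card_out_neighbours_le[OF assms(1,4)] card_out_neighbours_le[OF assms(2,5)] by auto
  have d: "card (?N R) \<le> d"
    using assms(6) \<open>w \<in> V\<close> by (simp add: max_outdeg_le_def)
  have "?N (H\<^sub>A \<union> H\<^sub>B \<union> R) = ?N H\<^sub>A \<union> ?N H\<^sub>B \<union> ?N R"
    by blast
  then have "card (?N (H\<^sub>A \<union> H\<^sub>B \<union> R)) \<le> card (?N H\<^sub>A \<union> ?N H\<^sub>B) + card (?N R)"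
    by (simp add: card_Un_le)
  also have "\<dots> \<le> card (?N H\<^sub>A) + card (?N H\<^sub>B) + card (?N R)"
    by (intro add_right_mono card_Un_le)
  also have "\<dots> \<le> c + d"
    using c d by (rule add_mono)
  finally show "card (?N (H\<^sub>A \<union> H\<^sub>B \<union> R)) \<le> c + d" .
qed

lemma weak_guidance_enat_subset: "weak_guidance_enat V E r H \<Longrightarrow> H \<subseteq> E"
  by (cases r) (auto simp: weak_guidance_enat_def weak_guidance_iff)

theorem lemma33:
  fixes V A B :: "'a set" and E H\<^sub>A H\<^sub>B :: "('a \<times> 'a) set" and r :: enat and c k :: nat
  assumes "graph V E"
    and "r \<ge> 1"
    and "A \<union> B = V" and "A \<inter> B = {}"
    and "card (V // {(u, v). equiv_AB E A B u v}) = k"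
    and "weak_guidance_enat A (induced E A) r H\<^sub>A" and "max_outdeg_le A H\<^sub>A c"
    and "weak_guidance_enat B (induced E B) r H\<^sub>B" and "max_outdeg_le B H\<^sub>B c"
  shows "\<exists>H. weak_guidance_enat V E r H \<and> max_outdeg_le V H (c + k)"
proof -
  let ?\<X> = "V // {(u, v). equiv_AB E A B u v}"
  let ?H = "H\<^sub>A \<union> H\<^sub>B \<union> towards_arcs E ?\<X>"
  have "finite ?\<X>"
    using assms(1,3) by (intro finite_quotient) (auto simp: graph_def equiv_AB_def)
  moreover have "Domain H\<^sub>A \<subseteq> A" "Domain H\<^sub>B \<subseteq> B"
    using weak_guidance_enat_subset[OF assms(6)] weak_guidance_enat_subset[OF assms(8)]
    by (auto simp: induced_def)
  ultimately have "max_outdeg_le V ?H (c + card ?\<X>)"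
    by (intro max_outdeg_le_Un[OF _ _ assms(4,7,9)] max_outdeg_le_towards_arcs)
  then have "max_outdeg_le V ?H (c + k)"
    using assms(5) by simp
  moreover have "weak_guidance_enat V E r ?H"
    using assms(6,8) weak_guidance_Un_towards_arcs[OF assms(1,3,4)]
    by (cases r) (auto simp: weak_guidance_enat_def)
  ultimately show ?thesis by blast
qed

end
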